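(* Let $\mathcal{L}$ be a Prob-solvable loop with guard polynomial $G$, let $I$ be a pure invariant of $\mathcal{L}$, and let $M$ be a polynomial expression over the program variables of $\mathcal{L}$. Suppose there exist $i_0\in\mathbb{N}$, $c>0$ and $\epsilon$ such that $\mathbb{P}(M_{i_0}<0)>0$ and for all $i\ge i_0$, almost surely: (1) $\neg\mathit{Guard}_i\wedge I_i\implies M_i\ge 0$; (2) $\mathit{Guard}_i\wedge I_i\implies \mathbb{E}(M_{i+1}-M_i\mid\mathcal{F}_i)\le -\epsilon$; (3) $|M_{i+1}-M_i|<c$. If $\epsilon>0$, then $\mathcal{L}$ is not AST. If $\epsilon\ge 0$, then $\mathcal{L}$ is not PAST.
   Context: A Prob-solvable loop $\mathcal{L}$ with real-valued variables $x_{(1)},\dots,x_{(m)}$ is a program consisting of: an initialization $x_{(1)}:=r_{(1)},\dots,x_{(m)}:=r_{(m)}$ with $r_{(j)}\in\mathbb{R}$; a guard $P>Q$ with $P,Q\in\mathbb{R}[x_{(1)},\dots,x_{(m)}]$; and a loop body which is the sequence, for $j=1,\dots,m$ in this order, of probabilistic updates $x_{(j)} := a_{(j1)}x_{(j)}+P_{(j1)}\ [p_{j1}]\ \cdots [p_{j(l_j-1)}]\ a_{(jl_j)}x_{(j)}+P_{(jl_j)}$, meaning the $k$-th alternative is executed with probability $p_{jk}$ for $k<l_j$ and the last with probability $1-\sum_{k<l_j}p_{jk}$ (choices independent), where $a_{(jk)}\ge0$ are constants, $P_{(jk)}\in\mathbb{R}[x_{(1)},\dots,x_{(j-1)}]$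 (evaluated at the already-updated values), $p_{jk}\in[0,1]$, $\sum_k p_{jk}<1$. The guard polynomial is $G:=P-Q$. A state is a vector in $\mathbb{R}^m$; a run is an infinite sequence of states. The loop space is the filtered probability space $(\Omega,\Sigma,(\mathcal{F}_i)_{i\in\mathbb{N}},\mathbb{P})$ with $\Omega=(\mathbb{R}^m)^\omega$, $\Sigma$ generated by cylinder sets of finite prefixes, $\mathcal{F}_i$ generated by cylinder sets of prefixes of length $i+1$, and $\mathbb{P}$ the measure under which the first state is the initialization state and each next state is obtained from the current state $s$ by executing the loop body once if $G(s)>0$, and equals $s$ otherwise. For an expression $E$, $E_i(\vartheta):=E(\vartheta_i)$; for a formula $B$, $B_i$ is $B$ evaluated at the $i$-th state; $\mathit{Guard}_i$ is the event $G_i>0$. The looping time is $T(\vartheta):=\inf\{i: \vartheta_i\not\models P>Q\}$; $\mathcal{L}$ is AST if $\mathbb{P}(T<\infty)=1$ and PAST if $\mathbb{E}(T)<\infty$. A pure invariant is a formula $I$ over the program variables such that $I_i$ holds almost surely for all $i$. *)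

theory Defs
  imports "HOL-Probability.Probability"
begin

text \<open>Elements of R[x_0,...,x_(m-1)] are represented by polynomial expressions; variable j is
  the (j+1)-th program variable.  A state is a function nat => real (only coordinates < m matter).\<close>

datatype mpoly = Var nat | Const real | Add mpoly mpoly | Mul mpoly mpoly

primrec peval :: "mpoly \<Rightarrow> (nat \<Rightarrow> real) \<Rightarrow> real" where
  "peval (Var j) s = s j"
| "peval (Const r) s = r"
| "peval (Add p q) s = peval p s + peval q s"
| "peval (Mul p q) s = peval p s * peval q s"

primrec pvars :: "mpoly \<Rightarrow> nat set" where
  "pvars (Var j) = {j}"
| "pvars (Const r) = {}"
| "pvars (Add p q) = pvars p \<union> pvars q"
| "pvars (Mul p q) = pvars p \<union> pvars q"

definition psub :: "mpoly \<Rightarrow> mpoly \<Rightarrow> mpoly" where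
  "psub p q = Add p (Mul (Const (-1)) q)"

text \<open>For variable j (0-based), branches L j is the list of alternatives (a_jk, P_jk),
  k = 1..l_j, and probs L j the list of probabilities p_j1..p_j(l_j-1); the last
  alternative has probability 1 - sum of these.\<close>

record ploop =
  nvars :: nat
  init :: "nat \<Rightarrow> real"
  guardP :: mpoly
  guardQ :: mpoly
  branches :: "nat \<Rightarrow> (real \<times> mpoly) list"
  probs :: "nat \<Rightarrow> real list"

definition prob_solvable :: "ploop \<Rightarrow> bool" where
  "prob_solvable L \<longleftrightarrow>
     pvars (guardP L) \<subseteq> {..<nvars L} \<and> pvars (guardQ L) \<subseteq> {..<nvars L} \<and>
     (\<forall>j < nvars L.
        branches L j \<noteq> [] \<and>
        length (probs L j) = length (branches L j) - 1 \<and>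
        (\<forall>p \<in> set (probs L j). 0 \<le> p \<and> p \<le> 1) \<and>
        sum_list (probs L j) < 1 \<and>
        (\<forall>(a, P) \<in> set (branches L j). 0 \<le> a \<and> pvars P \<subseteq> {..<j}))"

definition guard_poly :: "ploop \<Rightarrow> mpoly" where
  "guard_poly L = psub (guardP L) (guardQ L)"

definition branch_pmf :: "ploop \<Rightarrow> nat \<Rightarrow> nat pmf" where
  "branch_pmf L j = embed_pmf (\<lambda>k.
     if k < length (probs L j) then probs L j ! k
     else if k = length (probs L j) then 1 - sum_list (probs L j) else 0)"

text \<open>One execution of the loop body, given the chosen alternative c j for every variable j;
  the variables are updated in order j = 0, ..., m-1, using the already updated values.\<close>
definition body :: "ploop \<Rightarrow> (nat \<Rightarrow> nat) \<Rightarrow> (nat \<Rightarrow> real) \<Rightarrow> (nat \<Rightarrow> real)" where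
  "body L c s0 = fold (\<lambda>j s. s(j := fst (branches L j ! c j) * s j
                                      + peval (snd (branches L j ! c j)) s))
                      [0..<nvars L] s0"

definition guard_holds :: "ploop \<Rightarrow> (nat \<Rightarrow> real) \<Rightarrow> bool" where
  "guard_holds L s \<longleftrightarrow> peval (guard_poly L) s > 0"

text \<open>Independent choices: omega (i, j) is the alternative chosen for variable j in iteration i.\<close>
definition choice_space :: "ploop \<Rightarrow> (nat \<times> nat \<Rightarrow> nat) measure" where
  "choice_space L = PiM UNIV (\<lambda>ij. measure_pmf (branch_pmf L (snd ij)))"

primrec run_of :: "ploop \<Rightarrow> (nat \<times> nat \<Rightarrow> nat) \<Rightarrow> nat \<Rightarrow> (nat \<Rightarrow> real)" where
  "run_of L \<omega> 0 = init L"
| "run_of L \<omega> (Suc i) =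
     (if guard_holds L (run_of L \<omega> i) then body L (\<lambda>j. \<omega> (i, j)) (run_of L \<omega> i)
      else run_of L \<omega> i)"

definition state_space :: "(nat \<Rightarrow> real) measure" where
  "state_space = PiM UNIV (\<lambda>_. borel)"

definition run_space :: "(nat \<Rightarrow> nat \<Rightarrow> real) measure" where
  "run_space = PiM UNIV (\<lambda>_. state_space)"

definition loop_space :: "ploop \<Rightarrow> (nat \<Rightarrow> nat \<Rightarrow> real) measure" where
  "loop_space L = distr (choice_space L) run_space (run_of L)"

definition loop_filtration :: "ploop \<Rightarrow> nat \<Rightarrow> (nat \<Rightarrow> nat \<Rightarrow> real) measure" where
  "loop_filtration L i = sigma (space (loop_space L))
     {{\<theta> \<in> space (loop_space L). \<forall>k\<le>i. \<theta> k \<in> A k} | A. \<forall>k\<le>i. A k \<in> sets state_space}"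

definition pure_invariant :: "ploop \<Rightarrow> ((nat \<Rightarrow> real) \<Rightarrow> bool) \<Rightarrow> bool" where
  "pure_invariant L I \<longleftrightarrow> (\<forall>i. AE \<theta> in loop_space L. I (\<theta> i))"

definition looping_time :: "ploop \<Rightarrow> (nat \<Rightarrow> nat \<Rightarrow> real) \<Rightarrow> enat" where
  "looping_time L \<theta> = (if \<exists>i. \<not> guard_holds L (\<theta> i)
       then enat (LEAST i. \<not> guard_holds L (\<theta> i)) else \<infinity>)"

definition AST :: "ploop \<Rightarrow> bool" where
  "AST L \<longleftrightarrow> measure (loop_space L) {\<theta> \<in> space (loop_space L). looping_time L \<theta> < \<infinity>} = 1"

definition PAST :: "ploop \<Rightarrow> bool" where
  "PAST L \<longleftrightarrow> (\<integral>\<^sup>+ \<theta>. ennreal_of_enat (looping_time L \<theta>) \<partial>loop_space L) < \<infinity>"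

end

theory Submission
  imports Defs
begin

(* Let A be the event M_i0 < 0 and fix l > 0 with l c <= 1 and l c^2 <= epsilon.
   Because exp y <= 1 + y + y^2 for |y| <= 1 and the conditional drift of M is at most
   -epsilon while the guard holds, E[1_A exp(l M_n)] is non-increasing in n, so it stays
   below E[1_A exp(l M_i0)] < P(A).  Once the loop has stopped M_n >= 0, hence
   exp(l M_n) >= 1 there, and P(Guard_n) >= P(A) - E[1_A exp(l M_n)] is bounded away from 0:
   the loop is not AST.
   For epsilon >= 0 run the same argument with M itself on a part of A where M_i0 is bounded
   below by -K: then E[1_A M_n] <= -delta < 0, while 1_A M_n >= -(K + c (n - i0)) where the
   loop still runs and M_n >= 0 where it has stopped.  So P(Guard_n) >= delta / (K + c (n - i0)),
   and E(T) = sum_n P(Guard_n) diverges. *)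

lemma exp_le_quadratic:
  fixes y :: real
  assumes "\<bar>y\<bar> \<le> 1"
  shows "exp y \<le> 1 + y + y\<^sup>2"
proof (cases "y \<ge> 0")
  case True
  then show ?thesis using exp_bound[of y] assms by auto
next
  case False
  have "exp y * (1 - y) \<le> exp y * exp (- y)"
    using exp_ge_add_one_self[of "-y"] by (intro mult_left_mono) auto
  also have "\<dots> = 1" by (simp flip: exp_add)
  also have "1 \<le> (1 + y + y\<^sup>2) * (1 - y)"
  proof -
    have "(1 + y + y\<^sup>2) * (1 - y) = 1 - y ^ 3"
      by (simp add: algebra_simps power2_eq_square power3_eq_cube)
    moreover have "y ^ 3 \<le> 0" using False by (simp add: odd_pos power_le_zero_eq)
    ultimately show ?thesis by simp
  qed
  finally show ?thesis using False by simp
qed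

lemma not_summable_if_harmonic_lower_bound:
  fixes m :: "nat \<Rightarrow> real"
  assumes "\<delta> > 0" and "C > 0" and "\<And>k. \<delta> \<le> C * real (Suc k) * m (k + n)"
  shows "\<not> summable m"
proof
  assume "summable m"
  then have "summable (\<lambda>k. C / \<delta> * m (k + n))"
    by (intro summable_mult) (subst summable_iff_shift)
  then have "summable (\<lambda>k. inverse (real (Suc k)))"
  proof (rule summable_comparison_test')
    fix k
    have pos: "C + C * real k > 0" using assms(2) by (simp add: add_pos_nonneg)
    then have "inverse (real (Suc k)) = C / \<delta> * (\<delta> / (C * real (Suc k)))"
      using assms(1) by (simp add: field_simps)
    also have "\<dots> \<le> C / \<delta> * m (k + n)"
      using assms pos by (intro mult_left_mono) (auto simp: divide_le_eq algebra_simps)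
    finally show "norm (inverse (real (Suc k))) \<le> C / \<delta> * m (k + n)" by simp
  qed
  then have "summable (\<lambda>k. inverse (real k) :: real)"
    by (subst summable_Suc_iff[symmetric]) simp
  then show False using not_summable_harmonic by blast
qed

lemma (in finite_measure) bounded_part_of_negative_set:
  assumes [measurable]: "f \<in> borel_measurable M"
    and "measure M {x \<in> space M. f x < 0} > 0"
  obtains K :: nat where "measure M {x \<in> space M. - real K < f x \<and> f x < 0} > 0"
proof -
  define A where "A K = {x \<in> space M. - real K < f x \<and> f x < 0}" for K :: nat
  have "(\<Union>K. A K) = {x \<in> space M. f x < 0}"
    by (auto simp: A_def) (metis minus_less_iff reals_Archimedean2)
  show thesis
  proof (rule ccontr)
    assume "\<not> thesis"
    then have "\<not> measure M (A K) > 0" for K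
      using that unfolding A_def by blast
    then have "measure M (A K) = 0" for K
      by (metis measure_nonneg order.not_eq_order_implies_strict)
    then have "A K \<in> null_sets M" for K
      by (simp add: A_def null_sets_def emeasure_eq_measure)
    then have "(\<Union>K. A K) \<in> null_sets M" by blast
    then show False
      using assms(2) \<open>(\<Union>K. A K) = _\<close> by (simp add: null_sets_def emeasure_eq_measure)
  qed
qed

section \<open>Processes with negative drift while a guard holds\<close>

locale guarded_drift_process = prob_space P for P :: "'a measure" +
  fixes F :: "nat \<Rightarrow> 'a measure" and X :: "nat \<Rightarrow> 'a \<Rightarrow> real" and G :: "nat \<Rightarrow> 'a set"
    and i0 :: nat and c \<epsilon> :: real
  assumes subalgebra_F: "\<And>i. subalgebra P (F i)"
    and F_mono: "\<And>i j. i \<le> j \<Longrightarrow> sets (F i) \<subseteq> sets (F j)"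
    and X_adapted: "\<And>i. X i \<in> borel_measurable (F i)"
    and G_adapted: "\<And>i. G i \<in> sets (F i)"
    and X_frozen_off_G: "\<And>i. AE x in P. x \<notin> G i \<longrightarrow> X (Suc i) x = X i x"
    and X_nonneg_off_G: "\<And>i. i \<ge> i0 \<Longrightarrow> AE x in P. x \<notin> G i \<longrightarrow> X i x \<ge> 0"
    and drift_on_G: "\<And>i. i \<ge> i0 \<Longrightarrow> AE x in P. x \<in> G i \<longrightarrow>
               real_cond_exp P (F i) (\<lambda>x. X (Suc i) x - X i x) x \<le> - \<epsilon>"
    and increment_bounded: "\<And>i. i \<ge> i0 \<Longrightarrow> AE x in P. \<bar>X (Suc i) x - X i x\<bar> < c"
    and c_pos: "c > 0"
begin

lemma space_F: "space (F i) = space P"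
  using subalgebra_F[of i] by (simp add: subalgebra_def)

lemma sets_F_subset: "A \<in> sets (F i) \<Longrightarrow> A \<in> sets P"
  using subalgebra_F[of i] by (auto simp: subalgebra_def)

lemma X_measurable [measurable]: "X i \<in> borel_measurable P"
  using measurable_from_subalg[OF subalgebra_F X_adapted] .

lemma G_measurable [measurable]: "G i \<in> sets P"
  using sets_F_subset[OF G_adapted] .

lemma integrable_if_bounded:
  "f \<in> borel_measurable P \<Longrightarrow> AE x in P. \<bar>f x\<bar> \<le> B \<Longrightarrow> integrable P (f :: 'a \<Rightarrow> real)"
  by (rule integrable_const_bound[where B = B]) simp_all

lemma abs_X_diff_le: "n \<ge> i0 \<Longrightarrow> AE x in P. \<bar>X n x - X i0 x\<bar> \<le> c * real (n - i0)"
proof (induction n rule: nat_induct_at_least)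
  case (Suc n)
  show ?case using Suc.IH increment_bounded[OF Suc.hyps]
  proof eventually_elim
    case (elim x)
    have "\<bar>X (Suc n) x - X i0 x\<bar> \<le> \<bar>X (Suc n) x - X n x\<bar> + \<bar>X n x - X i0 x\<bar>" by linarith
    also have "\<dots> \<le> c + c * real (n - i0)" using elim by linarith
    also have "\<dots> = c * real (Suc n - i0)" using Suc.hyps by (simp add: Suc_diff_le distrib_left)
    finally show ?case .
  qed
qed simp

lemma integrable_indicator_X:
  assumes "A \<in> sets P" and "AE x in P. x \<in> A \<longrightarrow> \<bar>X i0 x\<bar> \<le> K" and "n \<ge> i0"
  shows "integrable P (\<lambda>x. indicator A x * X n x)"
proof (rule integrable_if_bounded[where B = "\<bar>K\<bar> + c * real (n - i0)"])
  show "AE x in P. \<bar>indicator A x * X n x\<bar> \<le> \<bar>K\<bar> + c * real (n - i0)"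
    using assms(2) abs_X_diff_le[OF assms(3)] by eventually_elim (use c_pos in \<open>auto simp: indicator_def\<close>)
qed (use assms(1) in measurable)

lemma indicator_exp_X_bounded:
  assumes "AE x in P. x \<in> A \<longrightarrow> X i0 x \<le> 0" and "n \<ge> i0" and "l \<ge> 0"
  shows "AE x in P. 0 \<le> indicator A x * exp (l * X n x) \<and>
                    indicator A x * exp (l * X n x) \<le> exp (l * (c * real (n - i0)))"
  using assms(1) abs_X_diff_le[OF assms(2)]
proof eventually_elim
  case (elim x)
  then have "x \<in> A \<Longrightarrow> l * X n x \<le> l * (c * real (n - i0))"
    using assms(3) by (intro mult_left_mono) auto
  then show ?case by (auto simp: indicator_def)
qed

lemma weighted_drift_le:
  assumes "i \<ge> i0" and h_adapted: "h \<in> borel_measurable (F i)"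
    and h_bounded: "AE x in P. 0 \<le> h x \<and> h x \<le> B"
  shows "(\<integral>x. h x * (X (Suc i) x - X i x) \<partial>P) \<le> - \<epsilon> * (\<integral>x. h x * indicator (G i) x \<partial>P)"
proof -
  interpret S: sigma_finite_subalgebra P "F i"
    by (rule finite_measure_subalgebra_is_sigma_finite) (unfold_locales, rule subalgebra_F)
  define D where "D = (\<lambda>x. X (Suc i) x - X i x)"
  define f where "f x = h x * indicator (G i) x" for x
  have [measurable]: "D \<in> borel_measurable P" "G i \<in> sets (F i)"
    unfolding D_def by (measurable, rule G_adapted)
  have [measurable]: "h \<in> borel_measurable P"
    using measurable_from_subalg[OF subalgebra_F h_adapted] .
  have f_adapted [measurable]: "f \<in> borel_measurable (F i)"
    unfolding f_def using h_adapted by measurable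
  have [measurable]: "f \<in> borel_measurable P"
    using measurable_from_subalg[OF subalgebra_F f_adapted] .
  have f_bounded: "AE x in P. 0 \<le> f x \<and> f x \<le> B"
    using h_bounded by eventually_elim (auto simp: f_def indicator_def)
  have "integrable P (\<lambda>x. f x * D x)"
  proof (rule integrable_if_bounded[where B = "B * c"])
    show "AE x in P. \<bar>f x * D x\<bar> \<le> B * c"
      using f_bounded increment_bounded[OF assms(1)]
      by eventually_elim (auto simp: abs_mult D_def intro: mult_mono)
  qed measurable
  then have cond_exp: "(\<integral>x. f x * real_cond_exp P (F i) D x \<partial>P) = (\<integral>x. f x * D x \<partial>P)"
    and integrable_cond_exp: "integrable P (\<lambda>x. f x * real_cond_exp P (F i) D x)"
    using S.real_cond_exp_intg by auto
  have "(\<integral>x. h x * D x \<partial>P) = (\<integral>x. f x * D x \<partial>P)"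
    using X_frozen_off_G[of i] by (intro integral_cong_AE) (auto simp: f_def D_def indicator_def)
  also have "\<dots> \<le> (\<integral>x. - \<epsilon> * f x \<partial>P)"
    unfolding cond_exp[symmetric]
  proof (rule integral_mono_AE[OF integrable_cond_exp])
    show "integrable P (\<lambda>x. - \<epsilon> * f x)"
      using f_bounded by (intro integrable_mult_right integrable_if_bounded[where B = B]) auto
    show "AE x in P. f x * real_cond_exp P (F i) D x \<le> - \<epsilon> * f x"
      using h_bounded drift_on_G[OF assms(1)]
    proof eventually_elim
      case (elim x)
      then have "x \<in> G i \<Longrightarrow> h x * real_cond_exp P (F i) D x \<le> h x * - \<epsilon>"
        by (intro mult_left_mono) (auto simp: D_def)
      then show ?case by (auto simp: f_def indicator_def mult.commute)
    qed
  qed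
  finally show ?thesis by (simp add: D_def f_def)
qed

lemma integral_indicator_X_le:
  assumes "\<epsilon> \<ge> 0" and A: "A \<in> sets (F i0)"
    and A_bounded: "AE x in P. x \<in> A \<longrightarrow> \<bar>X i0 x\<bar> \<le> K" and "n \<ge> i0"
  shows "(\<integral>x. indicator A x * X n x \<partial>P) \<le> (\<integral>x. indicator A x * X i0 x \<partial>P)"
  using \<open>n \<ge> i0\<close>
proof (induction n rule: nat_induct_at_least)
  case (Suc n)
  have [measurable]: "A \<in> sets (F n)" using F_mono[OF Suc.hyps] A by blast
  have [measurable]: "A \<in> sets P" using sets_F_subset[OF A] .
  have "(\<integral>x. indicator A x * X (Suc n) x \<partial>P) - (\<integral>x. indicator A x * X n x \<partial>P)
      = (\<integral>x. indicator A x * (X (Suc n) x - X n x) \<partial>P)"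
    using integrable_indicator_X[OF _ A_bounded] Suc.hyps
    by (simp add: right_diff_distrib flip: Bochner_Integration.integral_diff)
  also have "\<dots> \<le> - \<epsilon> * (\<integral>x. indicator A x * indicator (G n) x \<partial>P)"
    by (rule weighted_drift_le[OF Suc.hyps, where B = 1]) auto
  also have "\<dots> \<le> 0"
    using assms(1) by (simp add: integral_nonneg mult_nonpos_nonneg)
  finally show ?case using Suc.IH by simp
qed simp

lemma exp_X_Suc_le:
  assumes "n \<ge> i0" and "l > 0" and "l * c \<le> 1"
  shows "AE x in P. exp (l * X (Suc n) x) \<le>
           exp (l * X n x) * (1 + l * (X (Suc n) x - X n x) + (l * c)\<^sup>2 * indicator (G n) x)"
  using X_frozen_off_G[of n] increment_bounded[OF assms(1)]
proof eventually_elim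
  case (elim x)
  define D where "D = X (Suc n) x - X n x"
  show ?case
  proof (cases "x \<in> G n")
    case True
    have lD: "\<bar>l * D\<bar> \<le> l * c" using elim assms(2) by (simp add: abs_mult D_def)
    have "exp (l * D) \<le> 1 + l * D + (l * D)\<^sup>2"
      using lD assms(3) by (intro exp_le_quadratic) linarith
    also have "(l * D)\<^sup>2 \<le> (l * c)\<^sup>2"
      using lD by (metis abs_ge_zero power2_abs power_mono)
    finally have "exp (l * X n x) * exp (l * D) \<le> exp (l * X n x) * (1 + l * D + (l * c)\<^sup>2)"
      by simp
    then show ?thesis using True by (simp add: D_def algebra_simps flip: exp_add)
  qed (use elim in simp)
qed

lemma integral_indicator_exp_X_le:
  assumes A: "A \<in> sets (F i0)" and A_nonpos: "AE x in P. x \<in> A \<longrightarrow> X i0 x \<le> 0"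
    and "n \<ge> i0" and l: "l > 0" "l * c \<le> 1" "l * c\<^sup>2 \<le> \<epsilon>"
  shows "(\<integral>x. indicator A x * exp (l * X n x) \<partial>P) \<le> (\<integral>x. indicator A x * exp (l * X i0 x) \<partial>P)"
  using \<open>n \<ge> i0\<close>
proof (induction n rule: nat_induct_at_least)
  case (Suc n)
  have [measurable]: "A \<in> sets (F n)" using F_mono[OF Suc.hyps] A by blast
  have [measurable]: "A \<in> sets P" using sets_F_subset[OF A] .
  define h where "h x = indicator A x * exp (l * X n x)" for x
  define B where "B = exp (l * (c * real (n - i0)))"
  have h_adapted: "h \<in> borel_measurable (F n)"
    unfolding h_def using X_adapted[of n] by measurable
  have h_bounded: "AE x in P. 0 \<le> h x \<and> h x \<le> B"
    unfolding h_def B_def using indicator_exp_X_bounded[OF A_nonpos Suc.hyps] l(1) by simp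
  have [measurable]: "h \<in> borel_measurable P" unfolding h_def by measurable
  have int_h: "integrable P h"
    using h_bounded by (intro integrable_if_bounded[where B = B]) auto
  have int_hD: "integrable P (\<lambda>x. h x * (X (Suc n) x - X n x))"
  proof (rule integrable_if_bounded[where B = "B * c"])
    show "AE x in P. \<bar>h x * (X (Suc n) x - X n x)\<bar> \<le> B * c"
      using h_bounded increment_bounded[OF Suc.hyps]
      by eventually_elim (auto simp: abs_mult intro: mult_mono)
  qed measurable
  have int_hG: "integrable P (\<lambda>x. h x * indicator (G n) x)"
  proof (rule integrable_if_bounded[where B = B])
    show "AE x in P. \<bar>h x * indicator (G n) x\<bar> \<le> B"
      using h_bounded by eventually_elim (auto simp: indicator_def)
  qed measurable
  have E_hG: "(\<integral>x. h x * indicator (G n) x \<partial>P) \<ge> 0"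
    using h_bounded by (intro integral_nonneg_AE) (auto simp: indicator_def)
  have "(\<integral>x. indicator A x * exp (l * X (Suc n) x) \<partial>P)
      \<le> (\<integral>x. h x + l * (h x * (X (Suc n) x - X n x)) + (l * c)\<^sup>2 * (h x * indicator (G n) x) \<partial>P)"
  proof (rule integral_mono_AE)
    show "AE x in P. indicator A x * exp (l * X (Suc n) x) \<le>
        h x + l * (h x * (X (Suc n) x - X n x)) + (l * c)\<^sup>2 * (h x * indicator (G n) x)"
      using exp_X_Suc_le[OF Suc.hyps l(1,2)]
      by eventually_elim (auto simp: h_def indicator_def algebra_simps)
  next
    show "integrable P (\<lambda>x. indicator A x * exp (l * X (Suc n) x))"
      using indicator_exp_X_bounded[OF A_nonpos le_SucI[OF Suc.hyps] less_imp_le[OF l(1)]]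
      by (intro integrable_if_bounded[where B = "exp (l * (c * real (Suc n - i0)))"]) auto
  qed (use int_h int_hD int_hG in auto)
  also have "\<dots> = (\<integral>x. h x \<partial>P) + l * (\<integral>x. h x * (X (Suc n) x - X n x) \<partial>P)
      + (l * c)\<^sup>2 * (\<integral>x. h x * indicator (G n) x \<partial>P)"
    using int_h int_hD int_hG by simp
  also have "\<dots> \<le> (\<integral>x. h x \<partial>P) + (l * c\<^sup>2 - \<epsilon>) * l * (\<integral>x. h x * indicator (G n) x \<partial>P)"
    using mult_left_mono[OF weighted_drift_le[OF Suc.hyps h_adapted h_bounded], of l] l(1)
    by (simp add: algebra_simps power2_eq_square)
  also have "\<dots> \<le> (\<integral>x. h x \<partial>P)"
    using l E_hG by (simp add: mult_nonpos_nonneg)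
  finally show ?case using Suc.IH by (simp add: h_def)
qed simp

lemma guard_prob_bounded_below:
  assumes "\<epsilon> > 0" and "measure P {x \<in> space P. X i0 x < 0} > 0"
  obtains \<delta> where "\<delta> > 0" and "\<And>n. n \<ge> i0 \<Longrightarrow> \<delta> \<le> measure P (G n)"
proof -
  define A where "A = {x \<in> space P. X i0 x < 0}"
  have A_F: "A \<in> sets (F i0)"
    using X_adapted[of i0] unfolding A_def space_F[symmetric, of i0] by measurable
  have [measurable]: "A \<in> sets P" using sets_F_subset[OF A_F] .
  have A_nonpos: "AE x in P. x \<in> A \<longrightarrow> X i0 x \<le> 0" by (auto simp: A_def)
  define l where "l = min (1 / c) (\<epsilon> / c\<^sup>2)"
  have l: "l > 0" "l * c \<le> 1" "l * c\<^sup>2 \<le> \<epsilon>"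
  proof -
    show "l > 0" using c_pos assms(1) by (simp add: l_def)
    have "l \<le> 1 / c" "l \<le> \<epsilon> / c\<^sup>2" by (simp_all add: l_def)
    then show "l * c \<le> 1" "l * c\<^sup>2 \<le> \<epsilon>" using c_pos by (simp_all add: le_divide_eq)
  qed
  define E0 where "E0 = (\<integral>x. indicator A x * exp (l * X i0 x) \<partial>P)"
  have "E0 < (\<integral>x. indicator A x \<partial>P)"
    unfolding E0_def
  proof (rule integral_less_AE)
    show "integrable P (\<lambda>x. indicator A x * exp (l * X i0 x))"
      using indicator_exp_X_bounded[OF A_nonpos order.refl less_imp_le[OF l(1)]]
      by (intro integrable_if_bounded[where B = 1]) auto
    show "emeasure P A \<noteq> 0" using assms(2) by (auto simp: A_def measure_def)
    show "AE x in P. x \<in> A \<longrightarrow> indicator A x * exp (l * X i0 x) \<noteq> indicator A x"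
      "AE x in P. indicator A x * exp (l * X i0 x) \<le> indicator A x"
      using l(1) by (auto simp: A_def indicator_def mult_pos_neg less_imp_le)
  qed (auto simp: emeasure_eq_measure)
  then have "E0 < measure P A" by simp
  moreover have "measure P A - measure P (G n) \<le> E0" if "n \<ge> i0" for n
  proof -
    have "measure P A - measure P (G n) = (\<integral>x. indicator A x - indicator (G n) x \<partial>P)"
      by (subst Bochner_Integration.integral_diff) (auto simp: emeasure_eq_measure)
    also have "\<dots> \<le> (\<integral>x. indicator A x * exp (l * X n x) \<partial>P)"
    proof (rule integral_mono_AE)
      show "integrable P (\<lambda>x. indicator A x * exp (l * X n x))"
        using indicator_exp_X_bounded[OF A_nonpos that less_imp_le[OF l(1)]]
        by (intro integrable_if_bounded[where B = "exp (l * (c * real (n - i0)))"]) auto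
      show "AE x in P. indicator A x - indicator (G n) x \<le> indicator A x * exp (l * X n x)"
        using X_nonneg_off_G[OF that] by eventually_elim (use l(1) in \<open>auto simp: indicator_def\<close>)
    qed (auto simp: emeasure_eq_measure)
    also have "\<dots> \<le> E0"
      unfolding E0_def by (rule integral_indicator_exp_X_le[OF A_F A_nonpos that l])
    finally show ?thesis .
  qed
  ultimately show thesis
    using that[of "measure P A - E0"] by force
qed

lemma guard_prob_not_summable:
  assumes "\<epsilon> \<ge> 0" and "measure P {x \<in> space P. X i0 x < 0} > 0"
  shows "\<not> summable (\<lambda>n. measure P (G n))"
proof -
  obtain K :: nat where "measure P {x \<in> space P. - real K < X i0 x \<and> X i0 x < 0} > 0"
    using bounded_part_of_negative_set[OF X_measurable assms(2)] .
  moreover define A where "A = {x \<in> space P. - real K < X i0 x \<and> X i0 x < 0}"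
  ultimately have A_pos: "measure P A > 0" by simp
  have A_F: "A \<in> sets (F i0)"
    using X_adapted[of i0] unfolding A_def space_F[symmetric, of i0] by measurable
  have [measurable]: "A \<in> sets P" using sets_F_subset[OF A_F] .
  have A_bounded: "AE x in P. x \<in> A \<longrightarrow> \<bar>X i0 x\<bar> \<le> real K" by (auto simp: A_def)
  define \<delta> where "\<delta> = - (\<integral>x. indicator A x * X i0 x \<partial>P)"
  have "(\<integral>x. indicator A x * X i0 x \<partial>P) < (\<integral>x. 0 \<partial>P)"
  proof (rule integral_less_AE)
    show "integrable P (\<lambda>x. indicator A x * X i0 x)"
      using integrable_indicator_X[OF _ A_bounded] by simp
    show "emeasure P A \<noteq> 0" using A_pos by (auto simp: measure_def)
    show "AE x in P. x \<in> A \<longrightarrow> indicator A x * X i0 x \<noteq> 0"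
      "AE x in P. indicator A x * X i0 x \<le> 0"
      by (auto simp: A_def indicator_def)
  qed auto
  then have "\<delta> > 0" by (simp add: \<delta>_def)
  moreover have "\<delta> \<le> (real K + c * real (n - i0)) * measure P (G n)" if "n \<ge> i0" for n
  proof -
    have "- (real K + c * real (n - i0)) * measure P (G n)
        = (\<integral>x. - (real K + c * real (n - i0)) * indicator (G n) x \<partial>P)"
      by simp
    also have "\<dots> \<le> (\<integral>x. indicator A x * X n x \<partial>P)"
    proof (rule integral_mono_AE)
      show "integrable P (\<lambda>x. indicator A x * X n x)"
        using integrable_indicator_X[OF _ A_bounded that] by simp
      show "AE x in P. - (real K + c * real (n - i0)) * indicator (G n) x \<le> indicator A x * X n x"
        using X_nonneg_off_G[OF that] abs_X_diff_le[OF that] A_bounded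
        by eventually_elim (use c_pos in \<open>auto simp: indicator_def\<close>)
    qed (simp add: emeasure_eq_measure)
    also have "\<dots> \<le> - \<delta>"
      unfolding \<delta>_def by (simp add: integral_indicator_X_le[OF assms(1) A_F A_bounded that])
    finally show ?thesis by (simp add: algebra_simps)
  qed
  ultimately show ?thesis
  proof (intro not_summable_if_harmonic_lower_bound[where C = "real K + c" and n = i0])
    fix k
    assume "\<delta> > 0" and bound: "\<And>n. i0 \<le> n \<Longrightarrow> \<delta> \<le> (real K + c * real (n - i0)) * measure P (G n)"
    have "real K + c * real k \<le> (real K + c) * real (Suc k)"
      using c_pos by (simp add: algebra_simps)
    then have "(real K + c * real k) * measure P (G (k + i0))
        \<le> (real K + c) * real (Suc k) * measure P (G (k + i0))"
      by (intro mult_right_mono) simp_all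
    then show "\<delta> \<le> (real K + c) * real (Suc k) * measure P (G (k + i0))"
      using bound[of "k + i0"] by simp
  qed (use c_pos in auto)
qed

end

section \<open>Measurability of runs\<close>

lemma peval_measurable [measurable]:
  assumes "\<And>k. (\<lambda>\<omega>. s \<omega> k) \<in> borel_measurable N"
  shows "(\<lambda>\<omega>. peval p (s \<omega>)) \<in> borel_measurable N"
  using assms by (induction p) auto

lemma fold_update_measurable:
  assumes "\<And>k. (\<lambda>\<omega>. s \<omega> k) \<in> borel_measurable N"
    and "\<And>j. (\<lambda>\<omega>. c \<omega> j) \<in> measurable N (count_space UNIV)"
  shows "(\<lambda>\<omega>. fold (\<lambda>j s. s(j := fst (branches L j ! c \<omega> j) * s j
                                   + peval (snd (branches L j ! c \<omega> j)) s)) js (s \<omega>) k)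
           \<in> borel_measurable N"
  using assms(1)
proof (induction js arbitrary: s)
  case (Cons j js)
  have "(\<lambda>\<omega>. ((s \<omega>)(j := fst (branches L j ! c \<omega> j) * s \<omega> j
                            + peval (snd (branches L j ! c \<omega> j)) (s \<omega>))) k') \<in> borel_measurable N"
    for k'
  proof (cases "k' = j")
    case True
    have "(\<lambda>\<omega>. (\<lambda>b \<omega>. fst (branches L j ! b) * s \<omega> j + peval (snd (branches L j ! b)) (s \<omega>))
                 (c \<omega> j) \<omega>) \<in> borel_measurable N"
      by (rule measurable_compose_countable[OF _ assms(2)]) (use Cons.prems in measurable)
    then show ?thesis using True by simp
  qed (use Cons.prems in simp)
  from Cons.IH[OF this] show ?case by (simp del: fun_upd_apply)
qed simp

lemma run_of_component_measurable:
  "(\<lambda>\<omega>. run_of L \<omega> i k) \<in> borel_measurable (choice_space L)"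
proof (induction i arbitrary: k)
  case (Suc i)
  have choice: "(\<lambda>\<omega>. \<omega> (i, j)) \<in> measurable (choice_space L) (count_space UNIV)" for j
    unfolding choice_space_def
    by (rule measurable_compose[OF measurable_component_singleton[of "(i, j)"]]) auto
  have guard: "{\<omega> \<in> space (choice_space L). guard_holds L (run_of L \<omega> i)} \<in> sets (choice_space L)"
    unfolding guard_holds_def using Suc by measurable
  have body: "(\<lambda>\<omega>. body L (\<lambda>j. \<omega> (i, j)) (run_of L \<omega> i) k) \<in> borel_measurable (choice_space L)"
    unfolding body_def by (rule fold_update_measurable[OF Suc choice])
  have "(\<lambda>\<omega>. if guard_holds L (run_of L \<omega> i) then body L (\<lambda>j. \<omega> (i, j)) (run_of L \<omega> i) k
                    else run_of L \<omega> i k) \<in> borel_measurable (choice_space L)"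
    by (rule measurable_If[OF body Suc guard])
  then show ?case by (simp add: if_distribR)
qed simp

lemma run_of_measurable: "run_of L \<in> measurable (choice_space L) run_space"
  unfolding run_space_def state_space_def
  by (intro measurable_PiM_single' run_of_component_measurable) (auto simp: space_PiM)

lemma space_state_space [simp]: "space state_space = UNIV"
  by (auto simp: state_space_def space_PiM PiE_def extensional_def)

lemma space_run_space [simp]: "space run_space = UNIV"
  by (auto simp: run_space_def space_PiM PiE_def extensional_def)

lemma space_loop_space [simp]: "space (loop_space L) = UNIV"
  by (simp add: loop_space_def)

lemma prob_space_loop_space: "prob_space (loop_space L)"
proof -
  have "prob_space (choice_space L)"
    unfolding choice_space_def by (intro prob_space_PiM prob_space_measure_pmf)
  then show ?thesis
    unfolding loop_space_def using run_of_measurable by (rule prob_space.prob_space_distr)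
qed

definition prefix_cylinders :: "nat \<Rightarrow> (nat \<Rightarrow> nat \<Rightarrow> real) set set" where
  "prefix_cylinders i = {{\<theta>. \<forall>k\<le>i. \<theta> k \<in> A k} | A. \<forall>k\<le>i. A k \<in> sets state_space}"

lemma loop_filtration_eq_sigma: "loop_filtration L i = sigma UNIV (prefix_cylinders i)"
  by (simp add: loop_filtration_def prefix_cylinders_def)

lemma run_space_component_measurable [measurable]:
  "(\<lambda>\<theta>. \<theta> i) \<in> measurable run_space state_space"
  unfolding run_space_def by simp

lemma state_space_component_measurable [measurable]:
  "(\<lambda>s. s k) \<in> borel_measurable state_space"
  unfolding state_space_def by simp

lemma run_space_coordinate_measurable [measurable]:
  "(\<lambda>\<theta>. \<theta> i k) \<in> borel_measurable run_space"
  by (rule measurable_compose[OF run_space_component_measurable state_space_component_measurable])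

lemma prefix_cylinders_subset_sets: "prefix_cylinders i \<subseteq> sets run_space"
proof
  fix S assume "S \<in> prefix_cylinders i"
  then obtain A where S: "S = {\<theta>. \<forall>k\<le>i. \<theta> k \<in> A k}" and A: "\<forall>k\<le>i. A k \<in> sets state_space"
    unfolding prefix_cylinders_def by blast
  have "S = (\<Inter>k\<in>{..i}. (\<lambda>\<theta>. \<theta> k) -` A k \<inter> space run_space)"
    unfolding S by auto
  also have "\<dots> \<in> sets run_space"
    using A by (intro sets.finite_INT measurable_sets[OF run_space_component_measurable]) auto
  finally show "S \<in> sets run_space" .
qed

lemma subalgebra_loop_filtration: "subalgebra (loop_space L) (loop_filtration L i)"
  using sets.sigma_sets_subset[OF prefix_cylinders_subset_sets]
  by (simp add: subalgebra_def loop_filtration_eq_sigma loop_space_def)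

lemma prefix_cylinders_mono: "i \<le> j \<Longrightarrow> prefix_cylinders i \<subseteq> prefix_cylinders j"
proof
  fix S assume "i \<le> j" and "S \<in> prefix_cylinders i"
  then obtain A where S: "S = {\<theta>. \<forall>k\<le>i. \<theta> k \<in> A k}" and A: "\<forall>k\<le>i. A k \<in> sets state_space"
    unfolding prefix_cylinders_def by blast
  define A' where "A' k = (if k \<le> i then A k else UNIV)" for k
  have "S = {\<theta>. \<forall>k\<le>j. \<theta> k \<in> A' k}" using \<open>i \<le> j\<close> by (auto simp: S A'_def)
  moreover have "\<forall>k\<le>j. A' k \<in> sets state_space"
    using A sets.top[of state_space] by (simp add: A'_def)
  ultimately show "S \<in> prefix_cylinders j" unfolding prefix_cylinders_def by blast
qed

lemma sets_loop_filtration: "sets (loop_filtration L i) = sigma_sets UNIV (prefix_cylinders i)"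
  by (simp add: loop_filtration_eq_sigma sets_measure_of)

lemma loop_filtration_mono: "i \<le> j \<Longrightarrow> sets (loop_filtration L i) \<subseteq> sets (loop_filtration L j)"
  unfolding sets_loop_filtration by (rule sigma_sets_mono'[OF prefix_cylinders_mono])

lemma state_measurable_loop_filtration: "(\<lambda>\<theta>. \<theta> i) \<in> measurable (loop_filtration L i) state_space"
proof (rule measurableI)
  fix B assume "B \<in> sets state_space"
  define A where "A k = (if k = i then B else UNIV)" for k
  have "\<forall>k\<le>i. A k \<in> sets state_space"
    using \<open>B \<in> sets state_space\<close> sets.top[of state_space] by (simp add: A_def)
  then have "{\<theta>. \<forall>k\<le>i. \<theta> k \<in> A k} \<in> prefix_cylinders i"
    unfolding prefix_cylinders_def by blast
  moreover have "(\<lambda>\<theta>. \<theta> i) -` B \<inter> space (loop_filtration L i) = {\<theta>. \<forall>k\<le>i. \<theta> k \<in> A k}"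
    by (auto simp: loop_filtration_eq_sigma A_def)
  ultimately show "(\<lambda>\<theta>. \<theta> i) -` B \<inter> space (loop_filtration L i) \<in> sets (loop_filtration L i)"
    unfolding sets_loop_filtration by auto
qed simp

lemma peval_measurable_loop_filtration:
  "(\<lambda>\<theta>. peval p (\<theta> i)) \<in> borel_measurable (loop_filtration L i)"
  by (intro peval_measurable measurable_compose[OF state_measurable_loop_filtration]) simp

lemma AE_frozen_unless_guard:
  "AE \<theta> in loop_space L. \<not> guard_holds L (\<theta> i) \<longrightarrow> \<theta> (Suc i) = \<theta> i"
proof -
  have [measurable]: "(\<lambda>\<theta>. peval p (\<theta> i)) \<in> borel_measurable run_space" for p i
    by (intro peval_measurable) measurable
  have [measurable]: "Measurable.pred run_space (\<lambda>\<theta>. \<theta> (Suc i) k = \<theta> i k)" for k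
    unfolding pred_def by (rule borel_measurable_eq) simp_all
  have "Measurable.pred run_space (\<lambda>\<theta>. \<not> guard_holds L (\<theta> i) \<longrightarrow> (\<forall>k. \<theta> (Suc i) k = \<theta> i k))"
    unfolding guard_holds_def by measurable
  then show ?thesis
    unfolding loop_space_def fun_eq_iff pred_def by (simp add: AE_distr_iff[OF run_of_measurable])
qed

section \<open>Looping time\<close>

lemma guard_prefix_closed:
  assumes frozen: "\<And>i. \<not> g (\<theta> i) \<Longrightarrow> \<theta> (Suc i) = \<theta> i" and "g (\<theta> n)" and "j \<le> n"
  shows "g (\<theta> j)"
  using assms(2,3)
proof (induction n)
  case (Suc n)
  then show ?case using frozen[of n] by (metis le_Suc_eq)
qed simp

lemma AE_guard_prefix_closed:
  "AE \<theta> in loop_space L. \<forall>n j. guard_holds L (\<theta> n) \<longrightarrow> j \<le> n \<longrightarrow> guard_holds L (\<theta> j)"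
proof -
  have "AE \<theta> in loop_space L. \<forall>i. \<not> guard_holds L (\<theta> i) \<longrightarrow> \<theta> (Suc i) = \<theta> i"
    by (simp add: AE_all_countable AE_frozen_unless_guard)
  then show ?thesis
    by eventually_elim (auto intro: guard_prefix_closed[where g = "guard_holds L"])
qed

lemma less_looping_time_iff:
  assumes "\<And>n j. guard_holds L (\<theta> n) \<Longrightarrow> j \<le> n \<Longrightarrow> guard_holds L (\<theta> j)"
  shows "enat n < looping_time L \<theta> \<longleftrightarrow> guard_holds L (\<theta> n)"
proof (cases "\<exists>i. \<not> guard_holds L (\<theta> i)")
  case True
  define m where "m = (LEAST i. \<not> guard_holds L (\<theta> i))"
  have "\<not> guard_holds L (\<theta> m)"
    using True unfolding m_def by (rule LeastI_ex)
  then have "guard_holds L (\<theta> n) \<longleftrightarrow> n < m"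
    using assms[of n m] not_less_Least[of n "\<lambda>i. \<not> guard_holds L (\<theta> i)"]
    unfolding m_def by (meson not_less)
  then show ?thesis using True by (simp add: looping_time_def m_def)
qed (simp add: looping_time_def)

lemma card_less_enat_le: "of_nat (card {n. n < N \<and> enat n < t}) \<le> ennreal_of_enat t"
proof (cases t)
  case (enat m)
  have "card {n. n < N \<and> n < m} \<le> card {..<m}" by (intro card_mono) auto
  then show ?thesis using enat by simp
qed simp

definition guard_event :: "ploop \<Rightarrow> nat \<Rightarrow> (nat \<Rightarrow> nat \<Rightarrow> real) set" where
  "guard_event L i = {\<theta>. guard_holds L (\<theta> i)}"

lemma guard_event_loop_filtration: "guard_event L i \<in> sets (loop_filtration L i)"
proof -
  have "{\<theta> \<in> space (loop_filtration L i). 0 < peval (guard_poly L) (\<theta> i)} \<in> sets (loop_filtration L i)"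
    by (rule borel_measurable_less[OF borel_measurable_const peval_measurable_loop_filtration])
  then show ?thesis by (simp add: guard_event_def guard_holds_def loop_filtration_eq_sigma)
qed

lemma guard_event_loop_space [measurable]: "guard_event L i \<in> sets (loop_space L)"
  using subalgebra_loop_filtration[of L i] guard_event_loop_filtration[of L i]
  by (auto simp: subalgebra_def)

lemma not_AST_if_guard_prob_bounded_below:
  assumes "\<delta> > 0" and "\<And>n. n \<ge> i0 \<Longrightarrow> \<delta> \<le> measure (loop_space L) (guard_event L n)"
  shows "\<not> AST L"
proof
  assume "AST L"
  interpret prob_space "loop_space L" by (rule prob_space_loop_space)
  define S where "S N = (\<Union>i\<le>N. space (loop_space L) - guard_event L i)" for N
  have S_sets: "S N \<in> sets (loop_space L)" for N
    unfolding S_def by (intro sets.finite_UN ballI sets.Diff sets.top guard_event_loop_space) simp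
  have "(\<lambda>N. measure (loop_space L) (S N)) \<longlonglongrightarrow> measure (loop_space L) (\<Union>N. S N)"
    using S_sets by (intro finite_Lim_measure_incseq) (auto simp: incseq_def S_def)
  moreover have "measure (loop_space L) (S N) \<le> 1 - \<delta>" if "N \<ge> i0" for N
  proof -
    have "measure (loop_space L) (S N) \<le> measure (loop_space L) (space (loop_space L) - guard_event L N)"
    proof (rule finite_measure_mono_AE)
      show "AE \<theta> in loop_space L. \<theta> \<in> S N \<longrightarrow> \<theta> \<in> space (loop_space L) - guard_event L N"
        using AE_guard_prefix_closed[of L] by eventually_elim (auto simp: S_def guard_event_def)
    qed (intro sets.Diff sets.top guard_event_loop_space)
    also have "\<dots> = 1 - measure (loop_space L) (guard_event L N)"
      by (rule prob_compl[OF guard_event_loop_space])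
    finally show ?thesis using assms(2)[OF that] by simp
  qed
  ultimately have "measure (loop_space L) (\<Union>N. S N) \<le> 1 - \<delta>"
    by (intro LIMSEQ_le_const2) auto
  moreover have "(\<Union>N. S N) = {\<theta> \<in> space (loop_space L). looping_time L \<theta> < \<infinity>}"
    by (auto simp: S_def guard_event_def looping_time_def)
  ultimately show False using \<open>AST L\<close> \<open>\<delta> > 0\<close> by (simp add: AST_def)
qed

lemma not_PAST_if_guard_prob_not_summable:
  assumes "\<not> summable (\<lambda>n. measure (loop_space L) (guard_event L n))"
  shows "\<not> PAST L"
proof
  assume "PAST L"
  interpret prob_space "loop_space L" by (rule prob_space_loop_space)
  define r where "r = (\<integral>\<^sup>+ \<theta>. ennreal_of_enat (looping_time L \<theta>) \<partial>loop_space L)"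
  have partial_sums: "(\<Sum>n<N. measure (loop_space L) (guard_event L n)) \<le> enn2real r" for N
  proof -
    have "ennreal (\<Sum>n<N. measure (loop_space L) (guard_event L n))
        = (\<integral>\<^sup>+ \<theta>. (\<Sum>n<N. indicator (guard_event L n) \<theta>) \<partial>loop_space L)"
      by (simp add: nn_integral_sum emeasure_eq_measure sum_ennreal)
    also have "\<dots> \<le> r"
      unfolding r_def using AE_guard_prefix_closed
    proof (intro nn_integral_mono_AE, eventually_elim)
      case (elim \<theta>)
      have "(\<Sum>n<N. indicator (guard_event L n) \<theta> :: ennreal)
          = of_nat (card {n. n < N \<and> enat n < looping_time L \<theta>})"
        using less_looping_time_iff[of L \<theta>] elim
        by (simp add: indicator_def guard_event_def sum.If_cases Int_def lessThan_def)
      also have "\<dots> \<le> ennreal_of_enat (looping_time L \<theta>)" by (rule card_less_enat_le)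
      finally show ?case .
    qed
    also have "\<dots> = ennreal (enn2real r)"
      using \<open>PAST L\<close> by (simp add: PAST_def r_def less_top)
    finally show ?thesis by (simp add: ennreal_le_iff)
  qed
  have "summable (\<lambda>n. measure (loop_space L) (guard_event L n))"
  proof (rule bounded_imp_summable)
    show "(\<Sum>k\<le>n. measure (loop_space L) (guard_event L k)) \<le> enn2real r" for n
      using partial_sums[of "Suc n"] by (simp only: lessThan_Suc_atMost)
  qed simp
  with assms show False ..
qed

lemma loop_guarded_drift_process:
  fixes M :: mpoly and c \<epsilon> :: real
  assumes inv: "pure_invariant L I" and "c > 0"
    and cond1: "\<And>i. i \<ge> i0 \<Longrightarrow> AE \<theta> in loop_space L.
                  \<not> guard_holds L (\<theta> i) \<and> I (\<theta> i) \<longrightarrow> peval M (\<theta> i) \<ge> 0"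
    and cond2: "\<And>i. i \<ge> i0 \<Longrightarrow> AE \<theta> in loop_space L.
                  guard_holds L (\<theta> i) \<and> I (\<theta> i) \<longrightarrow>
                  real_cond_exp (loop_space L) (loop_filtration L i)
                    (\<lambda>\<theta>. peval M (\<theta> (Suc i)) - peval M (\<theta> i)) \<theta> \<le> - \<epsilon>"
    and cond3: "\<And>i. i \<ge> i0 \<Longrightarrow> AE \<theta> in loop_space L.
                  \<bar>peval M (\<theta> (Suc i)) - peval M (\<theta> i)\<bar> < c"
  shows "guarded_drift_process (loop_space L) (loop_filtration L) (\<lambda>i \<theta>. peval M (\<theta> i))
           (guard_event L) i0 c \<epsilon>"
proof (intro guarded_drift_process.intro guarded_drift_process_axioms.intro)
  have I: "AE \<theta> in loop_space L. I (\<theta> i)" for i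
    using inv by (simp add: pure_invariant_def)
  show "AE \<theta> in loop_space L. \<theta> \<notin> guard_event L i \<longrightarrow> 0 \<le> peval M (\<theta> i)" if "i0 \<le> i" for i
    using cond1[OF that] I[of i] by eventually_elim (auto simp: guard_event_def)
  show "AE \<theta> in loop_space L. \<theta> \<in> guard_event L i \<longrightarrow>
          real_cond_exp (loop_space L) (loop_filtration L i)
            (\<lambda>\<theta>. peval M (\<theta> (Suc i)) - peval M (\<theta> i)) \<theta> \<le> - \<epsilon>" if "i0 \<le> i" for i
    using cond2[OF that] I[of i] by eventually_elim (auto simp: guard_event_def)
  show "AE \<theta> in loop_space L. \<theta> \<notin> guard_event L i \<longrightarrow> peval M (\<theta> (Suc i)) = peval M (\<theta> i)" for i
    using AE_frozen_unless_guard[of L i] by eventually_elim (auto simp: guard_event_def)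
qed (use assms prob_space_loop_space subalgebra_loop_filtration loop_filtration_mono
       peval_measurable_loop_filtration guard_event_loop_filtration in auto)

theorem mainTheorem2:
  fixes L :: ploop and I :: "(nat \<Rightarrow> real) \<Rightarrow> bool" and M :: mpoly
    and i0 :: nat and c \<epsilon> :: real
  assumes loop: "prob_solvable L"
    and inv: "pure_invariant L I"
    and Mvars: "pvars M \<subseteq> {..<nvars L}"
    and c_pos: "c > 0"
    and neg: "measure (loop_space L) {\<theta> \<in> space (loop_space L). peval M (\<theta> i0) < 0} > 0"
    and cond1: "\<And>i. i \<ge> i0 \<Longrightarrow> AE \<theta> in loop_space L.
                  \<not> guard_holds L (\<theta> i) \<and> I (\<theta> i) \<longrightarrow> peval M (\<theta> i) \<ge> 0"
    and cond2: "\<And>i. i \<ge> i0 \<Longrightarrow> AE \<theta> in loop_space L.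
                  guard_holds L (\<theta> i) \<and> I (\<theta> i) \<longrightarrow>
                  real_cond_exp (loop_space L) (loop_filtration L i)
                    (\<lambda>\<theta>. peval M (\<theta> (Suc i)) - peval M (\<theta> i)) \<theta> \<le> - \<epsilon>"
    and cond3: "\<And>i. i \<ge> i0 \<Longrightarrow> AE \<theta> in loop_space L.
                  \<bar>peval M (\<theta> (Suc i)) - peval M (\<theta> i)\<bar> < c"
  shows "(\<epsilon> > 0 \<longrightarrow> \<not> AST L) \<and> (\<epsilon> \<ge> 0 \<longrightarrow> \<not> PAST L)"
proof -
  interpret guarded_drift_process "loop_space L" "loop_filtration L" "\<lambda>i \<theta>. peval M (\<theta> i)"
      "guard_event L" i0 c \<epsilon>
    using loop_guarded_drift_process[OF inv c_pos cond1 cond2 cond3] .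
  show ?thesis
  proof (intro conjI impI)
    assume "\<epsilon> > 0"
    then obtain \<delta> where "\<delta> > 0" "\<And>n. n \<ge> i0 \<Longrightarrow> \<delta> \<le> measure (loop_space L) (guard_event L n)"
      using guard_prob_bounded_below neg by blast
    then show "\<not> AST L" by (rule not_AST_if_guard_prob_bounded_below)
  next
    assume "\<epsilon> \<ge> 0"
    then show "\<not> PAST L"
      using guard_prob_not_summable neg by (intro not_PAST_if_guard_prob_not_summable) blast
  qed
qed

end
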